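(* There is a computable operator $G:2^\mathbb{N}\times\mathbb{N}\to\mathbb{Q}$ such that whenever $f$ is the diagram of a linear order $L$ (with domain $\mathbb{N}$), the map $t\mapsto G(f;t)$ is a faithful embedding of $L$ into $\mathbb{R}$.
   Context: The diagram of a linear order $L=(\mathbb{N},\le_L)$ is the characteristic function of $\{\langle s,t\rangle:s\le_L t\}$ under a standard pairing. For a set $X\subseteq\mathbb{R}$, an adjacency of $X$ is a pair $a<b$ in $X$ with $(a,b)\cap X=\emptyset$. An order monomorphism $F:L\to\mathbb{R}$ is faithful if every adjacency of the closure $\overline{\operatorname{ran}(F)}$ is an adjacency of $\operatorname{ran}(F)$. *)

theory Defs
  imports "HOL-Analysis.Analysis" "HOL-Library.Nat_Bijection"
begin

datatype orf = OZero | OSucc | OProj nat | OComp orf "orf list" | OPrec orf orf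
  | OMin orf | OOracle

inductive oeval :: "(nat \<Rightarrow> bool) \<Rightarrow> orf \<Rightarrow> nat list \<Rightarrow> nat \<Rightarrow> bool"
  for f :: "nat \<Rightarrow> bool" where
  zero: "oeval f OZero xs 0"
| succ: "oeval f OSucc (x # xs) (Suc x)"
| proj: "i < length xs \<Longrightarrow> oeval f (OProj i) xs (xs ! i)"
| comp: "length ys = length gs \<Longrightarrow> (\<forall>i < length gs. oeval f (gs ! i) xs (ys ! i))
          \<Longrightarrow> oeval f h ys z \<Longrightarrow> oeval f (OComp h gs) xs z"
| prec0: "oeval f g xs y \<Longrightarrow> oeval f (OPrec g h) (0 # xs) y"
| precS: "oeval f (OPrec g h) (n # xs) y \<Longrightarrow> oeval f h (y # n # xs) z
          \<Longrightarrow> oeval f (OPrec g h) (Suc n # xs) z"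
| mini: "oeval f g (n # xs) 0 \<Longrightarrow> (\<forall>m < n. \<exists>y. oeval f g (m # xs) y \<and> 0 < y)
          \<Longrightarrow> oeval f (OMin g) xs n"
| query: "oeval f OOracle (x # xs) (if f x then 1 else 0)"

definition rat_of_code :: "nat \<Rightarrow> rat" where
  "rat_of_code n = (case prod_decode n of (a, b) \<Rightarrow> of_int (int_decode a) / of_nat (Suc b))"

definition computable_operator :: "((nat \<Rightarrow> bool) \<Rightarrow> nat \<Rightarrow> rat) \<Rightarrow> bool" where
  "computable_operator G \<longleftrightarrow>
     (\<exists>e. \<forall>f t. \<exists>n. oeval f e [t] n \<and> rat_of_code n = G f t)"

definition is_diagram :: "(nat \<Rightarrow> bool) \<Rightarrow> nat rel \<Rightarrow> bool" where
  "is_diagram f r \<longleftrightarrow> (\<forall>s t. f (prod_encode (s, t)) = ((s, t) \<in> r))"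

definition adjacency :: "real set \<Rightarrow> real \<Rightarrow> real \<Rightarrow> bool" where
  "adjacency X a b \<longleftrightarrow> a \<in> X \<and> b \<in> X \<and> a < b \<and> {a<..<b} \<inter> X = {}"

definition order_monomorphism :: "nat rel \<Rightarrow> (nat \<Rightarrow> real) \<Rightarrow> bool" where
  "order_monomorphism r F \<longleftrightarrow> (\<forall>s t. s \<noteq> t \<longrightarrow> ((s, t) \<in> r \<longleftrightarrow> F s < F t))"

definition faithful :: "(nat \<Rightarrow> real) \<Rightarrow> bool" where
  "faithful F \<longleftrightarrow>
     (\<forall>a b. adjacency (closure (range F)) a b \<longrightarrow> adjacency (range F) a b)"

end

theory Submission
  imports Defs
begin

(* Each t is sent to the midpoint, point t, of a dyadic interval I_t computed by primitive
   recursion from the diagram: start from [0, 1] and run through k = 0, ..., t - 1; whenever no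
   s < k lies between k and t in L, the current interval of t is also that of k, and it is halved
   at point k, keeping the half on the side of t.  Hence no earlier point lies inside I_t, which
   makes point an order embedding, and each endpoint of I_t is 0, 1 or an earlier point.
   Faithfulness: if the left end a of a gap (a, b) of the closure of the range were not a point,
   let y be a point in (2a - b, a) that is the largest below a among an initial segment of the
   points, and let t be the first point in (y, a); then I_t reaches from y to at least b, so its
   midpoint lies beyond a.  The right end is handled by reflection. *)

section \<open>A criterion for faithfulness\<close>

lemma left_gap_end_in_range:
  fixes F L H :: "nat \<Rightarrow> real"
  assumes interval: "\<And>t. L t < H t" "\<And>t. F t = (L t + H t) / 2"
    and fresh: "\<And>s t. s < t \<Longrightarrow> F s \<le> L t \<or> H t \<le> F s"
    and upper_end: "\<And>t. H t = 1 \<or> H t \<in> F ` {..<t}"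
    and gap: "a < b" "b \<le> 1" "{a<..<b} \<inter> range F = {}"
    and a_closure: "a \<in> closure (range F)"
  shows "a \<in> range F"
proof (rule ccontr)
  assume a_notin: "a \<notin> range F"
  have approach: "\<exists>t. x < F t \<and> F t < a" if "x < a" for x
  proof -
    have "min (a - x) (b - a) > 0"
      using that gap by simp
    then obtain t where t: "dist (F t) a < min (a - x) (b - a)"
      using a_closure unfolding closure_approachable by blast
    then have "F t \<notin> {a<..<b}" "F t \<noteq> a" "F t < b"
      using gap a_notin by (auto simp: dist_real_def)
    with t show ?thesis
      by (auto simp: dist_real_def)
  qed
  obtain t0 where t0: "2 * a - b < F t0" "F t0 < a"
    using approach[of "2 * a - b"] gap by auto
  define y where "y = Max (F ` {s. s \<le> t0 \<and> F s < a})"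
  have "y \<in> F ` {s. s \<le> t0 \<and> F s < a}" "F t0 \<le> y"
    unfolding y_def using t0 by (auto intro: Max_in)
  then obtain s0 where s0: "s0 \<le> t0" "F s0 = y" "y < a" and "F t0 \<le> y"
    by blast
  define t where "t = (LEAST t. y < F t \<and> F t < a)"
  have t: "y < F t" "F t < a"
    unfolding t_def using LeastI_ex[OF approach[OF \<open>y < a\<close>]] by blast+
  have earlier: "F s \<le> y \<or> b \<le> F s" if "s < t" for s
  proof -
    have "\<not> (y < F s \<and> F s < a)"
      using not_less_Least[OF that[unfolded t_def]] .
    moreover have "F s \<notin> {a<..<b}" "F s \<noteq> a"
      using gap(3) a_notin by auto
    ultimately show ?thesis
      by auto
  qed
  have "s0 < t"
  proof (rule ccontr)
    assume "\<not> s0 < t"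
    then have "F t \<le> y"
      unfolding y_def using s0 t by (intro Max_ge) auto
    with t show False by simp
  qed
  then have "y \<le> L t"
    using fresh[of s0 t] s0 t interval[of t] by auto
  moreover have "b \<le> H t"
    using upper_end[of t]
  proof
    assume "H t \<in> F ` {..<t}"
    then obtain s where "s < t" "H t = F s"
      by auto
    then show ?thesis
      using earlier[of s] t interval[of t] by auto
  qed (use gap in simp)
  ultimately have "a < F t"
    using interval[of t] t0 \<open>F t0 \<le> y\<close> by simp
  with t show False by simp
qed

lemma faithful_if_interval_midpoints:
  fixes F L H :: "nat \<Rightarrow> real"
  assumes interval: "\<And>t. L t < H t" "\<And>t. F t = (L t + H t) / 2"
    and fresh: "\<And>s t. s < t \<Longrightarrow> F s \<le> L t \<or> H t \<le> F s"
    and ends: "\<And>t. L t = 0 \<or> L t \<in> F ` {..<t}" "\<And>t. H t = 1 \<or> H t \<in> F ` {..<t}"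
    and bounds: "\<And>t. 0 \<le> L t" "\<And>t. H t \<le> 1"
  shows "faithful F"
  unfolding faithful_def
proof (intro allI impI)
  fix a b
  assume "adjacency (closure (range F)) a b"
  then have adj: "a \<in> closure (range F)" "b \<in> closure (range F)" "a < b"
    "{a<..<b} \<inter> closure (range F) = {}"
    unfolding adjacency_def by auto
  then have gap: "{a<..<b} \<inter> range F = {}"
    using adj(4) closure_subset[of "range F"] by auto
  have "F t \<in> {0..1}" for t
    using interval(1)[of t] bounds(1)[of t] bounds(2)[of t] by (simp add: interval(2))
  then have "closure (range F) \<subseteq> {0..1}"
    by (simp add: closure_minimal image_subset_iff)
  then have "0 \<le> a" "b \<le> 1"
    using adj by auto
  have "a \<in> range F"
    using left_gap_end_in_range[OF interval fresh ends(2) \<open>a < b\<close> \<open>b \<le> 1\<close> gap adj(1)] .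
  moreover have "b \<in> range F"
  proof -
    let ?flip = "\<lambda>x::real. 1 - x"
    have "?flip ` closure (range F) \<subseteq> closure (?flip ` range F)"
      by (intro continuous_image_closure_subset[of UNIV]) (auto intro: continuous_intros)
    moreover have "1 - b \<in> ?flip ` closure (range F)"
      using adj(2) by simp
    ultimately have flip_closure: "1 - b \<in> closure (range (\<lambda>t. 1 - F t))"
      unfolding image_image by (rule subsetD)
    have flip_gap: "{1 - b<..<1 - a} \<inter> range (\<lambda>t. 1 - F t) = {}"
      using gap by auto
    have flip_interval: "1 - H t < 1 - L t" "1 - F t = ((1 - H t) + (1 - L t)) / 2" for t
      using interval[of t] by auto
    have flip_fresh: "1 - F s \<le> 1 - H t \<or> 1 - L t \<le> 1 - F s" if "s < t" for s t
      using fresh[OF that] by auto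
    have flip_end: "1 - L t = 1 \<or> 1 - L t \<in> (\<lambda>t. 1 - F t) ` {..<t}" for t
      using ends(1)[of t] by auto
    have "1 - b \<in> range (\<lambda>t. 1 - F t)"
      using \<open>a < b\<close> \<open>0 \<le> a\<close>
      by (intro left_gap_end_in_range[OF flip_interval flip_fresh flip_end _ _ flip_gap flip_closure]) simp_all
    then show ?thesis
      by auto
  qed
  ultimately show "adjacency (range F) a b"
    using adj(3) gap by (simp add: adjacency_def)
qed

section \<open>Nested dyadic intervals\<close>

definition between :: "(nat \<Rightarrow> nat \<Rightarrow> bool) \<Rightarrow> nat \<Rightarrow> nat \<Rightarrow> nat \<Rightarrow> bool" where
  "between le x y z \<longleftrightarrow> (le y x \<and> le x z) \<or> (le z x \<and> le x y)"

lemma between_sym: "between le x y z \<longleftrightarrow> between le x z y"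
  unfolding between_def by blast

definition unseparated :: "(nat \<Rightarrow> nat \<Rightarrow> bool) \<Rightarrow> nat \<Rightarrow> nat \<Rightarrow> bool" where
  "unseparated le k t \<longleftrightarrow> (\<forall>s<k. \<not> between le s k t)"

primrec lower_num :: "(nat \<Rightarrow> nat \<Rightarrow> bool) \<Rightarrow> nat \<Rightarrow> nat \<Rightarrow> nat" where
  "lower_num le t 0 = 0"
| "lower_num le t (Suc k) =
     (if unseparated le k t
      then (if le t k then 2 * lower_num le t k else 2 * lower_num le t k + 1)
      else lower_num le t k)"

primrec denom :: "(nat \<Rightarrow> nat \<Rightarrow> bool) \<Rightarrow> nat \<Rightarrow> nat \<Rightarrow> nat" where
  "denom le t 0 = 1"
| "denom le t (Suc k) = (if unseparated le k t then 2 * denom le t k else denom le t k)"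

lemma denom_pos: "0 < denom le t k"
  by (induction k) auto

definition point_code :: "(nat \<Rightarrow> nat \<Rightarrow> bool) \<Rightarrow> nat \<Rightarrow> nat" where
  "point_code le t = prod_encode (2 * (2 * lower_num le t t + 1), 2 * denom le t t - 1)"

lemma rat_of_code_prod_encode:
  assumes "0 < d"
  shows "rat_of_code (prod_encode (2 * m, d - 1)) = of_nat m / of_nat d"
proof -
  have "int_decode (2 * m) = int m"
    by (simp add: int_decode_def sum_decode_def)
  then show ?thesis
    using assms by (simp add: rat_of_code_def)
qed

locale linear_le =
  fixes le :: "nat \<Rightarrow> nat \<Rightarrow> bool"
  assumes trans: "le x y \<Longrightarrow> le y z \<Longrightarrow> le x z"
    and antisym: "le x y \<Longrightarrow> le y x \<Longrightarrow> x = y"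
    and total: "le x y \<or> le y x"
begin

lemma between_ordered:
  assumes "between le x y z" "le y z"
  shows "le y x \<and> le x z"
  using assms(1) unfolding between_def
proof
  assume "le y x \<and> le x z"
  then show ?thesis .
next
  assume "le z x \<and> le x y"
  then have "x = z"
    using assms(2) trans antisym by blast
  then show ?thesis
    using assms(2) total[of z z] by simp
qed

lemma le_iff_if_not_between:
  assumes "\<not> between le k u t"
  shows "le u k \<longleftrightarrow> le t k"
  using assms total unfolding between_def by blast

lemma between_iff_if_not_between:
  assumes "\<not> between le s u t" "\<not> between le k u t"
  shows "between le s k u \<longleftrightarrow> between le s k t"
  using assms total unfolding between_def by blast

lemma same_interval_if_none_between:
  assumes "\<forall>s<k. \<not> between le s u t"
  shows "lower_num le u k = lower_num le t k \<and> denom le u k = denom le t k"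
  using assms
proof (induction k)
  case 0
  then show ?case by simp
next
  case (Suc k)
  then have earlier: "\<forall>s<k. \<not> between le s u t" and "\<not> between le k u t"
    by auto
  have "unseparated le k u \<longleftrightarrow> unseparated le k t"
    unfolding unseparated_def
    using earlier between_iff_if_not_between[OF _ \<open>\<not> between le k u t\<close>] by blast
  moreover have "le u k \<longleftrightarrow> le t k"
    using le_iff_if_not_between[OF \<open>\<not> between le k u t\<close>] .
  ultimately show ?case
    using Suc.IH[OF earlier]
    by simp
qed

definition lower :: "nat \<Rightarrow> nat \<Rightarrow> real" where
  "lower t k = lower_num le t k / denom le t k"

definition upper :: "nat \<Rightarrow> nat \<Rightarrow> real" where
  "upper t k = (lower_num le t k + 1) / denom le t k"

definition point :: "nat \<Rightarrow> real" where
  "point t = (lower t t + upper t t) / 2"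

lemma lower_less_upper: "lower t k < upper t k"
  using denom_pos[of le t k] by (simp add: lower_def upper_def divide_strict_right_mono)

lemma lower_0: "lower t 0 = 0" and upper_0: "upper t 0 = 1"
  by (simp_all add: lower_def upper_def)

lemma lower_Suc:
  "lower t (Suc k) =
     (if unseparated le k t \<and> \<not> le t k then (lower t k + upper t k) / 2 else lower t k)"
  using denom_pos[of le t k] by (simp add: lower_def upper_def field_simps)

lemma upper_Suc:
  "upper t (Suc k) =
     (if unseparated le k t \<and> le t k then (lower t k + upper t k) / 2 else upper t k)"
  using denom_pos[of le t k] by (simp add: lower_def upper_def field_simps)

lemma incseq_lower: "incseq (lower t)"
proof (rule incseq_SucI)
  show "lower t k \<le> lower t (Suc k)" for k
    unfolding lower_Suc using lower_less_upper[of t k] by auto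
qed

lemma decseq_upper: "decseq (upper t)"
proof (rule decseq_SucI)
  show "upper t (Suc k) \<le> upper t k" for k
    unfolding upper_Suc using lower_less_upper[of t k] by auto
qed

lemma interval_subset_unit: "0 \<le> lower t k" "upper t k \<le> 1"
  using incseqD[OF incseq_lower, of 0 k t] decseqD[OF decseq_upper, of 0 k t]
  by (simp_all add: lower_0 upper_0)

lemma point_in_interval:
  assumes "k \<le> t"
  shows "lower t k < point t" "point t < upper t k"
  using incseqD[OF incseq_lower assms, of t] decseqD[OF decseq_upper assms, of t]
    lower_less_upper[of t t]
  by (simp_all add: point_def)

lemma midpoint_eq_point:
  assumes "unseparated le k t"
  shows "(lower t k + upper t k) / 2 = point k"
  using same_interval_if_none_between[of k k t] assms
  by (simp add: unseparated_def point_def lower_def upper_def)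

lemma lower_Suc_eq_point:
  "unseparated le k t \<Longrightarrow> \<not> le t k \<Longrightarrow> lower t (Suc k) = point k"
  by (simp add: lower_Suc midpoint_eq_point)

lemma upper_Suc_eq_point:
  "unseparated le k t \<Longrightarrow> le t k \<Longrightarrow> upper t (Suc k) = point k"
  by (simp add: upper_Suc midpoint_eq_point)

lemma point_le_lower_Suc:
  assumes "k < t" "le k t"
    and left_of_t: "\<And>s. s < k \<Longrightarrow> le s t \<Longrightarrow> point s \<le> lower t k"
    and right_of_k: "\<And>s. s < k \<Longrightarrow> le k s \<Longrightarrow> upper k k \<le> point s"
  shows "point k \<le> lower t (Suc k)"
proof (cases "unseparated le k t")
  case True
  have "\<not> le t k"
    using assms(1,2) antisym by fastforce
  with True show ?thesis
    by (simp add: lower_Suc_eq_point)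
next
  case False
  then obtain s where "s < k" "between le s k t"
    unfolding unseparated_def by blast
  then have "le k s" "le s t"
    using between_ordered assms(2) by blast+
  then show ?thesis
    using point_in_interval(2)[of k k] right_of_k[OF \<open>s < k\<close>] left_of_t[OF \<open>s < k\<close>] False
    by (simp add: lower_Suc)
qed

lemma upper_Suc_le_point:
  assumes "k < t" "le t k"
    and right_of_t: "\<And>s. s < k \<Longrightarrow> le t s \<Longrightarrow> upper t k \<le> point s"
    and left_of_k: "\<And>s. s < k \<Longrightarrow> le s k \<Longrightarrow> point s \<le> lower k k"
  shows "upper t (Suc k) \<le> point k"
proof (cases "unseparated le k t")
  case True
  with assms(2) show ?thesis
    by (simp add: upper_Suc_eq_point)
next
  case False
  then obtain s where "s < k" "between le s t k"
    unfolding unseparated_def between_sym[of le _ k] by blast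
  then have "le t s" "le s k"
    using between_ordered assms(2) by blast+
  then show ?thesis
    using point_in_interval(1)[of k k] right_of_t[OF \<open>s < k\<close>] left_of_k[OF \<open>s < k\<close>] False
    by (simp add: upper_Suc)
qed

lemma point_outside_interval:
  assumes "s < k" "k \<le> t"
  shows "(le s t \<longrightarrow> point s \<le> lower t k) \<and> (le t s \<longrightarrow> upper t k \<le> point s)"
  using assms
proof (induction k arbitrary: s t)
  case 0
  then show ?case by simp
next
  case (Suc k)
  show ?case
  proof (cases "s < k")
    case True
    have "lower t k \<le> lower t (Suc k)" "upper t (Suc k) \<le> upper t k"
      using incseq_lower decseq_upper by (simp_all add: incseq_Suc_iff decseq_Suc_iff)
    then show ?thesis
      using Suc.IH[of s t] True Suc.prems(2) by auto
  next
    case False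
    then have "s = k" "k < t"
      using Suc.prems by auto
    have "point k \<le> lower t (Suc k)" if "le k t"
      using \<open>k < t\<close> that by (rule point_le_lower_Suc) (use Suc.IH \<open>k < t\<close> in auto)
    moreover have "upper t (Suc k) \<le> point k" if "le t k"
      using \<open>k < t\<close> that by (rule upper_Suc_le_point) (use Suc.IH \<open>k < t\<close> in auto)
    ultimately show ?thesis
      using \<open>s = k\<close> by simp
  qed
qed

lemma point_strict_mono:
  assumes "s \<noteq> t" "le s t"
  shows "point s < point t"
proof (cases "s < t")
  case True
  then have "point s \<le> lower t t"
    using point_outside_interval[of s t t] assms(2) by simp
  then show ?thesis
    using point_in_interval(1)[of t t] by simp
next
  case False
  then have "t < s"
    using assms(1) by simp
  then have "upper s s \<le> point t"
    using point_outside_interval[of t s s] assms(2) by simp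
  then show ?thesis
    using point_in_interval(2)[of s s] by simp
qed

lemma point_less_iff: "s \<noteq> t \<Longrightarrow> point s < point t \<longleftrightarrow> le s t"
  using point_strict_mono[of s t] point_strict_mono[of t s] total[of s t] by auto

lemma lower_endpoint: "lower t k = 0 \<or> lower t k \<in> point ` {..<k}"
proof (induction k)
  case 0
  then show ?case by (simp add: lower_0)
next
  case (Suc k)
  then show ?case
    using midpoint_eq_point[of k t] by (auto simp: lower_Suc)
qed

lemma upper_endpoint: "upper t k = 1 \<or> upper t k \<in> point ` {..<k}"
proof (induction k)
  case 0
  then show ?case by (simp add: upper_0)
next
  case (Suc k)
  then show ?case
    using midpoint_eq_point[of k t] by (auto simp: upper_Suc)
qed

lemma faithful_point: "faithful point"
proof (rule faithful_if_interval_midpoints[where L = "\<lambda>t. lower t t" and H = "\<lambda>t. upper t t",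
      OF lower_less_upper point_def _ lower_endpoint upper_endpoint interval_subset_unit])
  show "point s \<le> lower t t \<or> upper t t \<le> point s" if "s < t" for s t
    using point_outside_interval[of s t t] that total[of s t] by auto
qed

lemma real_of_rat_point_code: "real_of_rat (rat_of_code (point_code le t)) = point t"
proof -
  have "rat_of_code (point_code le t) = of_nat (2 * lower_num le t t + 1) / of_nat (2 * denom le t t)"
    unfolding point_code_def using denom_pos[of le t t] by (intro rat_of_code_prod_encode) simp
  then have "real_of_rat (rat_of_code (point_code le t))
      = real (2 * lower_num le t t + 1) / real (2 * denom le t t)"
    by (simp only: of_rat_divide of_rat_of_nat_eq)
  also have "\<dots> = point t"
    using denom_pos[of le t t] by (simp add: point_def lower_def upper_def field_simps)
  finally show ?thesis .
qed

end

section \<open>Computability\<close>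

definition computes :: "nat \<Rightarrow> orf \<Rightarrow> ((nat \<Rightarrow> bool) \<Rightarrow> nat list \<Rightarrow> nat) \<Rightarrow> bool" where
  "computes n e F \<longleftrightarrow> (\<forall>f xs. length xs = n \<longrightarrow> oeval f e xs (F f xs))"

lemma computesD: "computes n e F \<Longrightarrow> length xs = n \<Longrightarrow> oeval f e xs (F f xs)"
  unfolding computes_def by blast

lemma computable_operatorI:
  assumes "computes 1 e (\<lambda>f xs. c f (xs ! 0))"
  shows "computable_operator (\<lambda>f t. rat_of_code (c f t))"
  unfolding computable_operator_def
proof (rule exI[of _ e], intro allI)
  fix f t
  have "oeval f e [t] (c f t)"
    using computesD[OF assms, of "[t]"] by simp
  then show "\<exists>n. oeval f e [t] n \<and> rat_of_code n = rat_of_code (c f t)"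
    by blast
qed

lemma computes_cong:
  assumes "computes n e F" "\<And>f xs. length xs = n \<Longrightarrow> F f xs = F' f xs"
  shows "computes n e F'"
  using assms unfolding computes_def by metis

lemma computes_cong1:
  assumes "computes 1 e F" "\<And>f x. F f [x] = F' f [x]"
  shows "computes 1 e F'"
  using assms(1) by (rule computes_cong) (use assms(2) in \<open>auto simp: length_Suc_conv\<close>)

lemma computes_cong2:
  assumes "computes 2 e F" "\<And>f x y. F f [x, y] = F' f [x, y]"
  shows "computes 2 e F'"
  using assms(1) by (rule computes_cong) (use assms(2) in \<open>auto simp: length_Suc_conv numeral_2_eq_2\<close>)

lemma computes_cong3:
  assumes "computes 3 e F" "\<And>f x y z. F f [x, y, z] = F' f [x, y, z]"
  shows "computes 3 e F'"
  using assms(1) by (rule computes_cong) (use assms(2) in \<open>auto simp: length_Suc_conv numeral_3_eq_3\<close>)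

named_theorems computes_intros

lemma computes_OZero [computes_intros]: "computes n OZero (\<lambda>f xs. 0)"
  unfolding computes_def by (auto intro: oeval.zero)

lemma computes_OProj [computes_intros]: "i < n \<Longrightarrow> computes n (OProj i) (\<lambda>f xs. xs ! i)"
  unfolding computes_def by (auto intro: oeval.proj)

lemma computes_OSucc [computes_intros]: "0 < n \<Longrightarrow> computes n OSucc (\<lambda>f xs. Suc (xs ! 0))"
  unfolding computes_def
proof (intro allI impI)
  fix f and xs :: "nat list"
  assume "length xs = n" "0 < n"
  then obtain y ys where "xs = y # ys"
    by (cases xs) auto
  then show "oeval f OSucc xs (Suc (xs ! 0))"
    using oeval.succ by simp
qed

lemma computes_OOracle [computes_intros]:
  "0 < n \<Longrightarrow> computes n OOracle (\<lambda>f xs. of_bool (f (xs ! 0)))"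
  unfolding computes_def
proof (intro allI impI)
  fix f and xs :: "nat list"
  assume "length xs = n" "0 < n"
  then obtain y ys where "xs = y # ys"
    by (cases xs) auto
  then show "oeval f OOracle xs (of_bool (f (xs ! 0)))"
    unfolding of_bool_def by (simp only: nth_Cons_0 oeval.query)
qed

lemma computes_OComp:
  assumes "computes m h H" "length gs = m" "length Gs = m" "\<forall>i<m. computes n (gs ! i) (Gs ! i)"
  shows "computes n (OComp h gs) (\<lambda>f xs. H f (map (\<lambda>G. G f xs) Gs))"
  unfolding computes_def
proof (intro allI impI)
  fix f and xs :: "nat list"
  assume "length xs = n"
  then show "oeval f (OComp h gs) xs (H f (map (\<lambda>G. G f xs) Gs))"
    using assms unfolding computes_def
    by (intro oeval.comp[where ys = "map (\<lambda>G. G f xs) Gs"]) auto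
qed

lemma computes_OComp1 [computes_intros]:
  "computes 1 h H \<Longrightarrow> computes n g1 G1 \<Longrightarrow> computes n (OComp h [g1]) (\<lambda>f xs. H f [G1 f xs])"
  using computes_OComp[of 1 h H "[g1]" "[G1]" n] by simp

lemma computes_OComp2 [computes_intros]:
  "computes 2 h H \<Longrightarrow> computes n g1 G1 \<Longrightarrow> computes n g2 G2 \<Longrightarrow>
    computes n (OComp h [g1, g2]) (\<lambda>f xs. H f [G1 f xs, G2 f xs])"
  using computes_OComp[of 2 h H "[g1, g2]" "[G1, G2]" n] by (simp add: less_Suc_eq nth_Cons')

lemma computes_OComp3 [computes_intros]:
  "computes 3 h H \<Longrightarrow> computes n g1 G1 \<Longrightarrow> computes n g2 G2 \<Longrightarrow> computes n g3 G3 \<Longrightarrow>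
    computes n (OComp h [g1, g2, g3]) (\<lambda>f xs. H f [G1 f xs, G2 f xs, G3 f xs])"
  using computes_OComp[of 3 h H "[g1, g2, g3]" "[G1, G2, G3]" n]
  by (simp add: less_Suc_eq nth_Cons' numeral_3_eq_3)

primrec prim_rec :: "(nat list \<Rightarrow> nat) \<Rightarrow> (nat list \<Rightarrow> nat) \<Rightarrow> nat \<Rightarrow> nat list \<Rightarrow> nat" where
  "prim_rec G H 0 ys = G ys"
| "prim_rec G H (Suc k) ys = H (prim_rec G H k ys # k # ys)"

(* Stated with n - 1 rather than Suc n so that it also applies to numeral arities. *)
lemma computes_OPrec [computes_intros]:
  assumes "computes (n - 1) g G" "computes (Suc n) h H" "0 < n"
  shows "computes n (OPrec g h) (\<lambda>f xs. prim_rec (G f) (H f) (xs ! 0) (tl xs))"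
  unfolding computes_def
proof (intro allI impI)
  fix f and xs :: "nat list"
  assume "length xs = n"
  then obtain x ys where xs: "xs = x # ys" and ys: "length ys = n - 1"
    using \<open>0 < n\<close> by (cases xs) auto
  have "oeval f (OPrec g h) (k # ys) (prim_rec (G f) (H f) k ys)" for k
  proof (induction k)
    case 0
    show ?case
      using computesD[OF assms(1) ys] by (simp add: oeval.prec0)
  next
    case (Suc k)
    have "length (prim_rec (G f) (H f) k ys # k # ys) = Suc n"
      using ys \<open>0 < n\<close> by simp
    with Suc.IH show ?case
      using computesD[OF assms(2)] by (simp add: oeval.precS)
  qed
  then show "oeval f (OPrec g h) xs (prim_rec (G f) (H f) (xs ! 0) (tl xs))"
    using xs by simp
qed

definition one_prog :: orf where
  "one_prog = OComp OSucc [OZero]"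

lemma computes_one [computes_intros]: "computes n one_prog (\<lambda>f xs. 1)"
  unfolding one_prog_def by (rule computes_cong, (rule computes_intros | arith)+) simp

definition add_prog :: orf where
  "add_prog = OPrec (OProj 0) (OComp OSucc [OProj 0])"

lemma computes_add [computes_intros]: "computes 2 add_prog (\<lambda>f xs. xs ! 0 + xs ! 1)"
  unfolding add_prog_def
  apply (rule computes_cong2, (rule computes_intros | arith)+)
  subgoal for f x y by (induction x) simp_all
  done

definition pred_prog :: orf where
  "pred_prog = OPrec OZero (OProj 1)"

lemma computes_pred [computes_intros]: "computes 1 pred_prog (\<lambda>f xs. xs ! 0 - 1)"
  unfolding pred_prog_def
  apply (rule computes_cong1, (rule computes_intros | arith)+)
  subgoal for f x by (cases x) simp_all
  done

definition sub_rev_prog :: orf where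
  "sub_rev_prog = OPrec (OProj 0) (OComp pred_prog [OProj 0])"

lemma computes_sub_rev [computes_intros]: "computes 2 sub_rev_prog (\<lambda>f xs. xs ! 1 - xs ! 0)"
  unfolding sub_rev_prog_def
  apply (rule computes_cong2, (rule computes_intros | arith)+)
  subgoal for f x y by (induction x) simp_all
  done

definition sub_prog :: orf where
  "sub_prog = OComp sub_rev_prog [OProj 1, OProj 0]"

lemma computes_sub [computes_intros]: "computes 2 sub_prog (\<lambda>f xs. xs ! 0 - xs ! 1)"
  unfolding sub_prog_def by (rule computes_cong2, (rule computes_intros | arith)+) simp

definition mul_prog :: orf where
  "mul_prog = OPrec OZero (OComp add_prog [OProj 0, OProj 2])"

lemma computes_mul [computes_intros]: "computes 2 mul_prog (\<lambda>f xs. xs ! 0 * xs ! 1)"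
  unfolding mul_prog_def
  apply (rule computes_cong2, (rule computes_intros | arith)+)
  subgoal for f x y by (induction x) simp_all
  done

definition triangle_prog :: orf where
  "triangle_prog = OPrec OZero (OComp add_prog [OProj 0, OComp OSucc [OProj 1]])"

lemma computes_triangle [computes_intros]: "computes 1 triangle_prog (\<lambda>f xs. triangle (xs ! 0))"
  unfolding triangle_prog_def
  apply (rule computes_cong1, (rule computes_intros | arith)+)
  subgoal for f x by (induction x) simp_all
  done

definition pair_prog :: orf where
  "pair_prog = OComp add_prog [OComp triangle_prog [OComp add_prog [OProj 0, OProj 1]], OProj 0]"

lemma computes_pair [computes_intros]: "computes 2 pair_prog (\<lambda>f xs. prod_encode (xs ! 0, xs ! 1))"
  unfolding pair_prog_def
  by (rule computes_cong2, (rule computes_intros | arith)+) (simp add: prod_encode_def)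

definition cond_prog :: orf where
  "cond_prog = OPrec (OProj 0) (OProj 3)"

lemma computes_cond [computes_intros]:
  "computes 3 cond_prog (\<lambda>f xs. if xs ! 0 = 0 then xs ! 1 else xs ! 2)"
  unfolding cond_prog_def
  apply (rule computes_cong3, (rule computes_intros | arith)+)
  subgoal for f x y z by (cases x) simp_all
  done

definition oracle_le :: "(nat \<Rightarrow> bool) \<Rightarrow> nat \<Rightarrow> nat \<Rightarrow> bool" where
  "oracle_le f x y \<longleftrightarrow> f (prod_encode (x, y))"

definition oracle_le_prog :: orf where
  "oracle_le_prog = OComp OOracle [pair_prog]"

lemma computes_oracle_le [computes_intros]:
  "computes 2 oracle_le_prog (\<lambda>f xs. of_bool (oracle_le f (xs ! 0) (xs ! 1)))"
  unfolding oracle_le_prog_def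
  by (rule computes_cong2, (rule computes_intros | arith)+) (simp add: oracle_le_def)

definition between_prog :: orf where
  "between_prog =
     OComp cond_prog
      [OComp mul_prog [OComp oracle_le_prog [OProj 1, OProj 0], OComp oracle_le_prog [OProj 0, OProj 2]],
       OComp mul_prog [OComp oracle_le_prog [OProj 2, OProj 0], OComp oracle_le_prog [OProj 0, OProj 1]],
       one_prog]"

lemma computes_between [computes_intros]:
  "computes 3 between_prog (\<lambda>f xs. of_bool (between (oracle_le f) (xs ! 0) (xs ! 1) (xs ! 2)))"
  unfolding between_prog_def
  by (rule computes_cong3, (rule computes_intros | arith)+) (simp add: between_def)

definition exists_between_prog :: orf where
  "exists_between_prog =
     OPrec OZero (OComp cond_prog [OProj 0, OComp between_prog [OProj 1, OProj 2, OProj 3], OProj 0])"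

lemma computes_exists_between [computes_intros]:
  "computes 3 exists_between_prog
     (\<lambda>f xs. of_bool (\<exists>s < xs ! 0. between (oracle_le f) s (xs ! 1) (xs ! 2)))"
  unfolding exists_between_prog_def
  apply (rule computes_cong3, (rule computes_intros | arith)+)
  subgoal for f x y z by (induction x) (auto simp: less_Suc_eq)
  done

definition lower_num_prog :: orf where
  "lower_num_prog =
     OPrec OZero
      (OComp cond_prog
        [OComp exists_between_prog [OProj 1, OProj 1, OProj 2],
         OComp sub_prog [OComp OSucc [OComp add_prog [OProj 0, OProj 0]], OComp oracle_le_prog [OProj 2, OProj 1]],
         OProj 0])"

lemma computes_lower_num [computes_intros]:
  "computes 2 lower_num_prog (\<lambda>f xs. lower_num (oracle_le f) (xs ! 1) (xs ! 0))"
  unfolding lower_num_prog_def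
  apply (rule computes_cong2, (rule computes_intros | arith)+)
  subgoal for f x y by (induction x) (auto simp: unseparated_def)
  done

definition denom_prog :: orf where
  "denom_prog =
     OPrec one_prog
      (OComp cond_prog
        [OComp exists_between_prog [OProj 1, OProj 1, OProj 2], OComp add_prog [OProj 0, OProj 0], OProj 0])"

lemma computes_denom [computes_intros]:
  "computes 2 denom_prog (\<lambda>f xs. denom (oracle_le f) (xs ! 1) (xs ! 0))"
  unfolding denom_prog_def
  apply (rule computes_cong2, (rule computes_intros | arith)+)
  subgoal for f x y by (induction x) (auto simp: unseparated_def)
  done

definition point_code_prog :: orf where
  "point_code_prog =
     OComp pair_prog
      [OComp add_prog
        [OComp OSucc [OComp add_prog [OComp lower_num_prog [OProj 0, OProj 0], OComp lower_num_prog [OProj 0, OProj 0]]],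
         OComp OSucc [OComp add_prog [OComp lower_num_prog [OProj 0, OProj 0], OComp lower_num_prog [OProj 0, OProj 0]]]],
       OComp pred_prog [OComp add_prog [OComp denom_prog [OProj 0, OProj 0], OComp denom_prog [OProj 0, OProj 0]]]]"

lemma computes_point_code:
  "computes 1 point_code_prog (\<lambda>f xs. point_code (oracle_le f) (xs ! 0))"
  unfolding point_code_prog_def
  by (rule computes_cong1, (rule computes_intros | arith)+) (simp add: point_code_def)

lemma computable_point_code: "computable_operator (\<lambda>f t. rat_of_code (point_code (oracle_le f) t))"
  using computes_point_code by (rule computable_operatorI)

lemma linear_le_if_linear_order:
  assumes "linear_order r"
  shows "linear_le (\<lambda>x y. (x, y) \<in> r)"
proof
  have "refl r" "trans r" "antisym r" "total r"
    using assms unfolding linear_order_on_def partial_order_on_def preorder_on_def by auto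
  then show "(x, y) \<in> r \<Longrightarrow> (y, z) \<in> r \<Longrightarrow> (x, z) \<in> r"
    and "(x, y) \<in> r \<Longrightarrow> (y, x) \<in> r \<Longrightarrow> x = y"
    and "(x, y) \<in> r \<or> (y, x) \<in> r" for x y z
    by (auto dest: transD antisymD) (cases "x = y"; auto simp: refl_on_def total_on_def)
qed

lemma oracle_le_eq_if_is_diagram: "is_diagram f r \<Longrightarrow> oracle_le f = (\<lambda>x y. (x, y) \<in> r)"
  unfolding is_diagram_def oracle_le_def by blast

theorem lemma5p10:
  "\<exists>G :: (nat \<Rightarrow> bool) \<Rightarrow> nat \<Rightarrow> rat.
     computable_operator G \<and>
     (\<forall>f r. linear_order r \<and> is_diagram f r \<longrightarrow>
        order_monomorphism r (\<lambda>t. real_of_rat (G f t)) \<and>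
        faithful (\<lambda>t. real_of_rat (G f t)))"
proof (rule exI[of _ "\<lambda>f t. rat_of_code (point_code (oracle_le f) t)"], intro conjI allI impI)
  show "computable_operator (\<lambda>f t. rat_of_code (point_code (oracle_le f) t))"
    by (rule computable_point_code)
  fix f r
  assume "linear_order r \<and> is_diagram f r"
  then have diagram: "oracle_le f = (\<lambda>x y. (x, y) \<in> r)" and "linear_order r"
    using oracle_le_eq_if_is_diagram by auto
  interpret linear_le "oracle_le f"
    unfolding diagram using \<open>linear_order r\<close> by (rule linear_le_if_linear_order)
  have "(\<lambda>t. real_of_rat (rat_of_code (point_code (oracle_le f) t))) = point"
    using real_of_rat_point_code by auto
  moreover have "order_monomorphism r point"
    unfolding order_monomorphism_def using point_less_iff by (simp add: diagram)
  ultimately show "order_monomorphism r (\<lambda>t. real_of_rat (rat_of_code (point_code (oracle_le f) t)))"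
    and "faithful (\<lambda>t. real_of_rat (rat_of_code (point_code (oracle_le f) t)))"
    using faithful_point by simp_all
qed

end
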